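(* For every $q=2^l$ with $l\ge3$ there is a quantum CSS code over $\mathbb F_q$ of length $n=3q/4$, dimension $q/4$ and distance at least $\lfloor q/3\rfloor-q/4+1$, together with an orthonormal basis $\{|\bar x\rangle: x\in\mathbb F_q^{q/4}\}$ of its code space, such that for all $x,y,z\in\mathbb F_q^{q/4}$, $$\big(\mathsf{CCZ}^{(q)}\big)^{\otimes n}|\bar x\rangle|\bar y\rangle|\bar z\rangle=(-1)^{\mathrm{tr}\left(\sum_{i=1}^{q/4}x_iy_iz_i\right)}|\bar x\rangle|\bar y\rangle|\bar z\rangle,$$ i.e. transversal $\mathsf{CCZ}^{(q)}$ acts as $(\overline{\mathsf{CCZ}^{(q)}})^{\otimes q/4}$ on the logical qudits.
   Context: A qudit has Hilbert space $\mathbb C^q$ with basis $\{|x\rangle:x\in\mathbb F_q\}$. $\mathrm{tr}:\mathbb F_q\to\mathbb F_2$ is $\mathrm{tr}(x)=\sum_{i=0}^{l-1}x^{2^i}$ and $\mathsf{CCZ}^{(q)}|x\rangle|y\rangle|z\rangle=(-1)^{\mathrm{tr}(xyz)}|x\rangle|y\rangle|z\rangle$; $(\mathsf{CCZ}^{(q)})^{\otimes n}$ acts on three code blocks, coordinatewise. For linear codes $C_2^\perp\subseteq C_1\subseteq\mathbb F_q^n$, the CSS code $\mathrm{CSS}(C_1,C_2)$ is spanned by $\sum_{\alpha\in C_2^\perp}|c+\alpha\rangle$, $c\in C_1$, has dimension $\dim C_1-\dim C_2^\perp$ and distance equal to the minimum Hamming weight of $(C_1\setminus C_2^\perp)\cup(C_2\setminus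 C_1^\perp)$, with $\perp$ taken for the bilinear form $\sum_i u_iv_i$. *)

theory Defs
  imports "HOL-Analysis.Analysis"
begin

text \<open>Absolute trace F_q \<rightarrow> F_2 for q = 2^l, tr(x) = sum_{i<l} x^(2^i); its value lies in the
  prime field {0,1} of the field.\<close>
definition ftr :: "nat \<Rightarrow> 'a::field \<Rightarrow> 'a" where
  "ftr l x = (\<Sum>i<l. x ^ (2 ^ i))"

text \<open>(-1)^t for t in F_2 (embedded in F_q as 0 or 1).\<close>
definition sign_of :: "'a::field \<Rightarrow> complex" where
  "sign_of t = (if t = 0 then 1 else -1)"

definition bil :: "'a::field ^ 'n \<Rightarrow> 'a ^ 'n \<Rightarrow> 'a" where
  "bil u v = (\<Sum>i\<in>UNIV. u $ i * v $ i)"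

definition dual_code :: "('a::field ^ 'n) set \<Rightarrow> ('a ^ 'n) set" where
  "dual_code C = {u. \<forall>v\<in>C. bil u v = 0}"

definition hweight :: "'a::zero ^ 'n \<Rightarrow> nat" where
  "hweight v = card {i. v $ i \<noteq> 0}"

text \<open>States of n qudits: functions F_q^n \<Rightarrow> C (coefficients in the computational basis).\<close>
definition ket :: "'b \<Rightarrow> ('b \<Rightarrow> complex)" where
  "ket b = (\<lambda>v. if v = b then 1 else 0)"

definition inner_st :: "('b::finite \<Rightarrow> complex) \<Rightarrow> ('b \<Rightarrow> complex) \<Rightarrow> complex" where
  "inner_st \<psi> \<phi> = (\<Sum>v\<in>UNIV. cnj (\<psi> v) * \<phi> v)"

definition coset_state :: "('a::field ^ 'n) set \<Rightarrow> 'a ^ 'n \<Rightarrow> ('a ^ 'n \<Rightarrow> complex)" where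
  "coset_state D c = (\<lambda>v. \<Sum>\<alpha>\<in>D. ket (c + \<alpha>) v)"

definition css_space :: "('a::{field,finite} ^ 'n) set \<Rightarrow> ('a ^ 'n) set \<Rightarrow> ('a ^ 'n \<Rightarrow> complex) set" where
  "css_space C1 C2 = {\<lambda>v. \<Sum>c\<in>C1. f c * coset_state (dual_code C2) c v | f. True}"

definition tensor3 :: "('b \<Rightarrow> complex) \<Rightarrow> ('b \<Rightarrow> complex) \<Rightarrow> ('b \<Rightarrow> complex) \<Rightarrow> ('b \<times> 'b \<times> 'b \<Rightarrow> complex)" where
  "tensor3 a b c = (\<lambda>(u, v, w). a u * b v * c w)"

definition transversal_CCZ :: "nat \<Rightarrow> (('a::field ^ 'n) \<times> ('a ^ 'n) \<times> ('a ^ 'n) \<Rightarrow> complex)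
    \<Rightarrow> (('a ^ 'n) \<times> ('a ^ 'n) \<times> ('a ^ 'n) \<Rightarrow> complex)" where
  "transversal_CCZ l \<Psi> = (\<lambda>(u, v, w).
     (\<Prod>i\<in>UNIV. sign_of (ftr l (u $ i * v $ i * w $ i))) * \<Psi> (u, v, w))"

end

theory Submission
  imports Defs "HOL-Computational_Algebra.Polynomial"
begin

text \<open>Split the points of \<open>F\<^sub>q\<close> into \<open>n = 3q/4\<close> code coordinates \<open>\<alpha>\<close> and \<open>k = q/4\<close> logical
  points \<open>\<sigma>\<close>, and let \<open>C\<^sub>1\<close>, \<open>C\<^sub>2\<close> be the evaluations at \<open>\<alpha>\<close> of the polynomials of degree at most
  \<open>m = (q - 2) div 3\<close> and \<open>q - 2 - m\<close>. Since \<open>\<Sum>\<^sub>a f(a) = 0\<close> over \<open>F\<^sub>q\<close> whenever \<open>deg f \<le> q - 2\<close>,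
  the dual of \<open>C\<^sub>2\<close> consists of the evaluations of degree-\<open>m\<close> polynomials vanishing on \<open>\<sigma>\<close>, and
  the logical content of a codeword of \<open>C\<^sub>1\<close> is the vector of values of its polynomial on \<open>\<sigma>\<close>.
  For three such polynomials \<open>f g h\<close> still \<open>deg (f g h) \<le> 3m \<le> q - 2\<close>, so in characteristic two
  \<open>\<Sum>\<^sub>\<alpha> f g h = \<Sum>\<^sub>\<sigma> f g h\<close>; as the trace is additive, transversal CCZ multiplies every coset
  state by the logical phase. The distance bound is the root bound for polynomials.\<close>

section \<open>Power sums over a finite field\<close>

lemma of_nat_card_eq_0: "of_nat CARD('a::{field,finite}) = (0::'a)"
proof -
  have "(\<Sum>a\<in>UNIV. a + 1) = (\<Sum>a\<in>UNIV. (a::'a))"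
    by (rule sum.reindex_bij_witness[of _ "\<lambda>a. a - 1" "\<lambda>a. a + 1"]) auto
  then show ?thesis
    by (simp add: sum.distrib)
qed

lemma card_field_ge_2: "CARD('a::{field,finite}) \<ge> 2"
proof -
  have "card {0::'a, 1} \<le> CARD('a)"
    by (intro card_mono) auto
  then show ?thesis by simp
qed

lemma power_card_minus_1_eq_1:
  fixes x :: "'a::{field,finite}"
  assumes "x \<noteq> 0"
  shows "x ^ (CARD('a) - 1) = 1"
proof -
  have "(\<Prod>a\<in>UNIV-{0}. x * a) = (\<Prod>a\<in>UNIV-{0}. a)"
    by (rule prod.reindex_bij_witness[of _ "\<lambda>a. a / x" "\<lambda>a. x * a"]) (use assms in auto)
  moreover have "(\<Prod>a\<in>UNIV-{0}. x * a) = x ^ (CARD('a) - 1) * (\<Prod>a\<in>UNIV-{0}. a)"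
    by (simp add: prod.distrib card_Diff_singleton)
  moreover have "(\<Prod>a\<in>UNIV-{0::'a}. a) \<noteq> 0"
    by simp
  ultimately show ?thesis
    by (metis mult_cancel_right2)
qed

lemma power_card_eq_self:
  fixes x :: "'a::{field,finite}"
  shows "x ^ CARD('a) = x"
proof (cases "x = 0")
  case False
  have "x ^ CARD('a) = x * x ^ (CARD('a) - 1)"
    using card_field_ge_2[where 'a='a] by (simp flip: power_Suc)
  then show ?thesis
    using power_card_minus_1_eq_1[OF False] by simp
qed simp

lemma sum_UNIV_power_eq_0:
  assumes "e \<le> CARD('a) - 2"
  shows "(\<Sum>a\<in>(UNIV :: 'a::{field,finite} set). a ^ e) = 0"
proof (cases "e = 0")
  case True
  then show ?thesis
    using of_nat_card_eq_0[where 'a='a] by simp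
next
  case False
  text \<open>Since \<open>x ^ e - 1\<close> has at most \<open>e < CARD('a) - 1\<close> roots, some unit \<open>b\<close> has \<open>b ^ e \<noteq> 1\<close>;
    substituting \<open>a \<mapsto> b * a\<close> multiplies the sum by \<open>b ^ e\<close>.\<close>
  define p :: "'a poly" where "p = monom 1 e + [:-1:]"
  have degree_p: "degree p = e"
    unfolding p_def using False by (subst degree_add_eq_left) (auto simp: degree_monom_eq)
  have "\<exists>b::'a. b \<noteq> 0 \<and> b ^ e \<noteq> 1"
  proof (rule ccontr)
    assume "\<not> ?thesis"
    then have "UNIV - {0} \<subseteq> {x::'a. poly p x = 0}"
      by (auto simp: p_def poly_monom)
    then have "card (UNIV - {0::'a}) \<le> card {x. poly p x = 0}"
      by (intro card_mono) auto
    also have "\<dots> \<le> e"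
      using card_poly_roots_bound[of p] degree_p False by force
    finally show False
      using assms card_field_ge_2[where 'a='a] by (simp add: card_Diff_singleton)
  qed
  then obtain b :: 'a where b: "b \<noteq> 0" "b ^ e \<noteq> 1"
    by blast
  have "(\<Sum>a\<in>UNIV. (b * a) ^ e) = (\<Sum>a\<in>UNIV. a ^ e)"
    by (rule sum.reindex_bij_witness[of _ "\<lambda>a. a / b" "\<lambda>a. b * a"]) (use b in auto)
  then have "b ^ e * (\<Sum>a\<in>UNIV. a ^ e) = (\<Sum>a\<in>UNIV. a ^ e)"
    by (simp add: power_mult_distrib sum_distrib_left)
  then have "(b ^ e - 1) * (\<Sum>a\<in>UNIV. a ^ e) = 0"
    by (simp add: algebra_simps)
  then show ?thesis
    using b by simp
qed

lemma sum_UNIV_power: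
  assumes "e \<le> 2 * CARD('a) - 3"
  shows "(\<Sum>a\<in>(UNIV :: 'a::{field,finite} set). a ^ e) = (if e = CARD('a) - 1 then -1 else 0)"
proof -
  have q: "CARD('a) \<ge> 2"
    by (rule card_field_ge_2)
  consider "e \<le> CARD('a) - 2" | "e = CARD('a) - 1" | "e \<ge> CARD('a)"
    by linarith
  then show ?thesis
  proof cases
    case 1
    then show ?thesis
      using sum_UNIV_power_eq_0[OF 1] q by auto
  next
    case 2
    have "(a::'a) ^ e = (if a = 0 then 0 else 1)" for a
      using 2 q power_card_minus_1_eq_1[of a] by auto
    then have "(\<Sum>a\<in>UNIV. (a::'a) ^ e) = (\<Sum>a\<in>UNIV. if (a::'a) = 0 then 0 else 1)"
      by simp
    also have "\<dots> = of_nat (card (UNIV - {0::'a}))"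
      by (simp add: sum.If_cases Int_def Diff_eq Compl_eq)
    also have "\<dots> = of_nat CARD('a) - 1"
      using q by (simp add: card_Diff_singleton of_nat_diff)
    finally show ?thesis
      using 2 of_nat_card_eq_0[where 'a='a] by simp
  next
    case 3
    have "(a::'a) ^ e = a ^ (e - (CARD('a) - 1))" for a
    proof (cases "a = 0")
      case False
      have "a ^ e = a ^ (CARD('a) - 1) * a ^ (e - (CARD('a) - 1))"
        using 3 by (simp flip: power_add)
      then show ?thesis
        using power_card_minus_1_eq_1[OF False] by simp
    qed (use 3 q in \<open>simp add: power_0_left\<close>)
    then have "(\<Sum>a\<in>UNIV. (a::'a) ^ e) = (\<Sum>a\<in>UNIV. a ^ (e - (CARD('a) - 1)))"
      by simp
    also have "\<dots> = 0"
      using assms 3 q by (intro sum_UNIV_power_eq_0) linarith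
    finally show ?thesis
      using 3 q by simp
  qed
qed

lemma sum_UNIV_poly_eq_0:
  fixes p :: "'a::{field,finite} poly"
  assumes "degree p \<le> CARD('a) - 2"
  shows "(\<Sum>a\<in>UNIV. poly p a) = 0"
proof -
  have "(\<Sum>a\<in>UNIV. poly p a) = (\<Sum>i\<le>degree p. coeff p i * (\<Sum>a\<in>UNIV. a ^ i))"
    by (simp add: poly_altdef sum_distrib_left sum.swap[where A = UNIV])
  also have "\<dots> = 0"
    using assms by (intro sum.neutral) (auto intro!: sum_UNIV_power_eq_0)
  finally show ?thesis .
qed

lemma sum_UNIV_poly_mult_power:
  fixes p :: "'a::{field,finite} poly"
  assumes "degree p \<le> CARD('a) - 1" "j \<le> CARD('a) - 2"
  shows "(\<Sum>a\<in>UNIV. poly p a * a ^ j) = - coeff p (CARD('a) - 1 - j)"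
proof -
  have q: "CARD('a) \<ge> 2"
    by (rule card_field_ge_2)
  have "(\<Sum>a\<in>UNIV. poly p a * a ^ j) = (\<Sum>i\<le>degree p. coeff p i * (\<Sum>a\<in>UNIV. a ^ (i + j)))"
    by (simp add: poly_altdef sum_distrib_left sum_distrib_right sum.swap[where A = UNIV]
        power_add mult.assoc)
  also have "\<dots> = (\<Sum>i\<le>degree p. if i = CARD('a) - 1 - j then - coeff p i else 0)"
    using assms q by (intro sum.cong refl) (auto simp: sum_UNIV_power)
  also have "\<dots> = - coeff p (CARD('a) - 1 - j)"
    by (auto simp: coeff_eq_0)
  finally show ?thesis .
qed

section \<open>The absolute trace in characteristic two\<close>

lemma CHAR_eq_2_if_card_eq_power_2:
  assumes "CARD('a::{field,finite}) = 2 ^ l" "l > 0"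
  shows "CHAR('a) = 2"
proof -
  have "prime CHAR('a)"
    by (intro prime_CHAR_semidom finite_imp_CHAR_pos) simp
  moreover have "CHAR('a) dvd 2 ^ l"
    using of_nat_card_eq_0[where 'a='a] assms(1) by (metis of_nat_eq_0_iff_char_dvd)
  ultimately show ?thesis
    by (metis prime_dvd_power prime_nat_iff two_is_prime_nat primes_dvd_imp_eq)
qed

lemma ftr_add:
  fixes a b :: "'a::field"
  assumes "CHAR('a) = 2"
  shows "ftr l (a + b) = ftr l a + ftr l b"
  unfolding ftr_def using assms by (simp add: freshmans_dream' sum.distrib)

lemma ftr_eq_0_or_1:
  fixes x :: "'a::{field,finite}"
  assumes "CARD('a) = 2 ^ l" "l > 0"
  shows "ftr l x = 0 \<or> ftr l x = 1"
proof -
  have char: "CHAR('a) = 2"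
    by (rule CHAR_eq_2_if_card_eq_power_2[OF assms])
  have "ftr l x ^ 2 = (\<Sum>i<l. (x ^ (2 ^ i)) ^ 2)"
    unfolding ftr_def using char by (intro freshmans_dream_sum'[where n = 1]) simp_all
  also have "\<dots> = (\<Sum>i<l. x ^ (2 ^ Suc i))"
    by (simp add: power_mult[symmetric] mult.commute)
  also have "\<dots> = ftr l x - x + x ^ (2 ^ l)"
    using sum.lessThan_Suc_shift[of "\<lambda>i. x ^ (2 ^ i)" l] by (simp add: ftr_def algebra_simps)
  also have "\<dots> = ftr l x"
    using power_card_eq_self[of x] assms(1) by simp
  finally have "ftr l x * (ftr l x - 1) = 0"
    by (simp add: power2_eq_square algebra_simps)
  then show ?thesis
    by simp
qed

lemma prod_sign_of_ftr:
  fixes t :: "'i \<Rightarrow> 'a::{field,finite}"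
  assumes "CARD('a) = 2 ^ l" "l > 0" "finite I"
  shows "(\<Prod>i\<in>I. sign_of (ftr l (t i))) = sign_of (ftr l (\<Sum>i\<in>I. t i))"
  using assms(3)
proof (induction I rule: finite_induct)
  case empty
  then show ?case
    by (simp add: ftr_def sign_of_def power_0_left)
next
  case (insert i I)
  have char: "CHAR('a) = 2"
    by (rule CHAR_eq_2_if_card_eq_power_2[OF assms(1,2)])
  then have "(1::'a) + 1 = 0"
    using of_nat_CHAR[where 'a='a] by simp
  then have "sign_of (s + u) = sign_of s * sign_of u" if "s = 0 \<or> s = 1" "u = 0 \<or> u = 1" for s u :: 'a
    using that by (auto simp: sign_of_def)
  then show ?case
    using insert ftr_eq_0_or_1[OF assms(1,2)] by (simp add: ftr_add[OF char])
qed

section \<open>Lagrange interpolation and evaluation codes\<close>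

definition lagrange_basis :: "('i::finite \<Rightarrow> 'a::field) \<Rightarrow> 'i \<Rightarrow> 'a poly" where
  "lagrange_basis pts i =
     smult (inverse (\<Prod>j\<in>UNIV - {i}. pts i - pts j)) (\<Prod>j\<in>UNIV - {i}. [:- pts j, 1:])"

definition lagrange_interp :: "('i::finite \<Rightarrow> 'a::field) \<Rightarrow> ('i \<Rightarrow> 'a) \<Rightarrow> 'a poly" where
  "lagrange_interp pts y = (\<Sum>i\<in>UNIV. smult (y i) (lagrange_basis pts i))"

lemma poly_lagrange_basis:
  assumes "inj pts"
  shows "poly (lagrange_basis pts i) (pts j) = (if i = j then 1 else 0)"
proof (cases "i = j")
  case True
  have "(\<Prod>k\<in>UNIV - {i}. pts i - pts k) \<noteq> 0"
    using assms by (auto simp: inj_eq)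
  then show ?thesis
    using True by (simp add: lagrange_basis_def poly_prod)
next
  case False
  then have "(\<Prod>k\<in>UNIV - {i}. pts j - pts k) = 0"
    by (intro prod_zero) auto
  then show ?thesis
    using False by (simp add: lagrange_basis_def poly_prod)
qed

lemma degree_lagrange_basis: "degree (lagrange_basis pts i) \<le> CARD('i) - 1"
  for pts :: "'i::finite \<Rightarrow> 'a::field"
proof -
  have "degree (\<Prod>j\<in>UNIV - {i}. [:- pts j, 1:]) \<le> (\<Sum>j\<in>UNIV - {i}. degree [:- pts j, 1:])"
    using degree_prod_sum_le[of "UNIV - {i}" "\<lambda>j. [:- pts j, 1:]"] by (simp add: o_def)
  then show ?thesis
    unfolding lagrange_basis_def
    by (simp add: card_Diff_singleton order.trans[OF degree_smult_le])
qed

lemma poly_lagrange_interp: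
  assumes "inj pts"
  shows "poly (lagrange_interp pts y) (pts j) = y j"
proof -
  have "poly (lagrange_interp pts y) (pts j) = (\<Sum>i\<in>UNIV. y i * (if i = j then 1 else 0))"
    by (simp add: lagrange_interp_def poly_sum poly_lagrange_basis[OF assms])
  also have "\<dots> = (\<Sum>i\<in>UNIV. if i = j then y i else 0)"
    by (intro sum.cong) auto
  finally show ?thesis
    by simp
qed

lemma degree_lagrange_interp: "degree (lagrange_interp pts y) \<le> CARD('i) - 1"
  for pts :: "'i::finite \<Rightarrow> 'a::field"
  unfolding lagrange_interp_def
  by (intro degree_sum_le order.trans[OF degree_smult_le degree_lagrange_basis]) simp

lemma lagrange_interp_add:
  "lagrange_interp pts (\<lambda>i. y i + z i) = lagrange_interp pts y + lagrange_interp pts z"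
  by (simp add: lagrange_interp_def smult_add_left sum.distrib)

lemma lagrange_interp_smult: "lagrange_interp pts (\<lambda>i. c * y i) = smult c (lagrange_interp pts y)"
  by (rule poly_eqI) (simp add: lagrange_interp_def coeff_sum sum_distrib_left mult.assoc)

definition eval_vec :: "('n \<Rightarrow> 'a::comm_ring_1) \<Rightarrow> 'a poly \<Rightarrow> 'a ^ 'n" where
  "eval_vec pts p = (\<chi> i. poly p (pts i))"

lemma eval_vec_nth [simp]: "eval_vec pts p $ i = poly p (pts i)"
  by (simp add: eval_vec_def)

lemma eval_vec_0 [simp]: "eval_vec pts 0 = 0"
  and eval_vec_add: "eval_vec pts (p + q) = eval_vec pts p + eval_vec pts q"
  and eval_vec_diff: "eval_vec pts (p - q) = eval_vec pts p - eval_vec pts q"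
  and eval_vec_smult: "eval_vec pts (smult c p) = c *s eval_vec pts p"
  by (simp_all add: vec_eq_iff)

lemma subspace_eval_vec_image:
  assumes "0 \<in> S" "\<And>p q. p \<in> S \<Longrightarrow> q \<in> S \<Longrightarrow> p + q \<in> S"
    "\<And>c p. p \<in> S \<Longrightarrow> smult c p \<in> S"
  shows "vec.subspace (eval_vec pts ` S)"
  unfolding vec.subspace_def
proof (intro conjI ballI allI)
  show "0 \<in> eval_vec pts ` S"
    using assms(1) by (metis eval_vec_0 image_eqI)
next
  fix x y assume "x \<in> eval_vec pts ` S" "y \<in> eval_vec pts ` S"
  then obtain p q where "p \<in> S" "q \<in> S" "x = eval_vec pts p" "y = eval_vec pts q"
    by blast
  then show "x + y \<in> eval_vec pts ` S"
    using assms(2) by (metis eval_vec_add image_eqI)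
next
  fix c x assume "x \<in> eval_vec pts ` S"
  then obtain p where "p \<in> S" "x = eval_vec pts p"
    by blast
  then show "c *s x \<in> eval_vec pts ` S"
    using assms(3) by (metis eval_vec_smult image_eqI)
qed

lemma eval_vec_inj_on_low_degree:
  fixes pts :: "'n::finite \<Rightarrow> 'a::field"
  assumes "inj pts" "degree p < CARD('n)" "degree q < CARD('n)" "eval_vec pts p = eval_vec pts q"
  shows "p = q"
proof (rule poly_eqI_degree[of "range pts"])
  have "card (range pts) = CARD('n)"
    using assms(1) by (simp add: card_image)
  then show "degree p < card (range pts)" "degree q < card (range pts)"
    using assms(2,3) by simp_all
  show "poly p x = poly q x" if "x \<in> range pts" for x
    using that assms(4) by (auto simp: vec_eq_iff)
qed

lemma hweight_eval_vec:
  fixes pts :: "'n::finite \<Rightarrow> 'a::field"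
  assumes "inj pts" "p \<noteq> 0"
  shows "CARD('n) - degree p \<le> hweight (eval_vec pts p)"
proof -
  let ?Z = "{i. poly p (pts i) = 0}"
  have "card ?Z = card (pts ` ?Z)"
    by (metis card_image inj_on_subset subset_UNIV assms(1))
  also have "\<dots> \<le> card {x. poly p x = 0}"
    by (rule card_mono[OF poly_roots_finite[OF assms(2)]]) blast
  also have "\<dots> \<le> degree p"
    by (rule card_poly_roots_bound[OF assms(2)])
  finally have "card ?Z \<le> degree p" .
  have "hweight (eval_vec pts p) = card (UNIV - ?Z)"
    unfolding hweight_def by (rule arg_cong[where f = card]) auto
  also have "\<dots> = CARD('n) - card ?Z"
    by (rule card_Diff_subset) auto
  finally show ?thesis
    using \<open>card ?Z \<le> degree p\<close> by linarith
qed

section \<open>CSS codes with a complemented encoding\<close>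

lemma zero_in_dual_code: "0 \<in> dual_code C"
  by (simp add: dual_code_def bil_def)

lemma coset_state_eq_indicator:
  fixes D :: "('a::{field,finite} ^ 'n) set"
  shows "coset_state D c v = (if v - c \<in> D then 1 else 0)"
proof -
  have "coset_state D c v = (\<Sum>\<alpha>\<in>D. if \<alpha> = v - c then 1 else 0)"
    unfolding coset_state_def ket_def by (intro sum.cong refl) auto
  then show ?thesis
    by simp
qed

text \<open>\<open>C\<close> and \<open>D\<close> play the roles of \<open>C\<^sub>1\<close> and \<open>C\<^sub>2\<^sup>\<bottom>\<close>; \<open>enc\<close> picks one representative of every
  coset of \<open>D\<close> in \<open>C\<close>, and \<open>basis_state x\<close> is the normalised coset state of \<open>enc x\<close>.\<close>
locale css_encoding =
  fixes C D :: "('a::{field,finite} ^ 'n) set" and enc :: "'a ^ 'k \<Rightarrow> 'a ^ 'n"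
  assumes subspace_C: "vec.subspace C"
    and subspace_D: "vec.subspace D"
    and D_subset_C: "D \<subseteq> C"
    and linear_enc: "Vector_Spaces.linear (*s) (*s) enc"
    and enc_in_C: "enc x \<in> C"
    and C_subset_enc_plus_D: "c \<in> C \<Longrightarrow> \<exists>x. c - enc x \<in> D"
    and enc_in_D_imp_0: "enc x \<in> D \<Longrightarrow> x = 0"
begin

lemma enc_diff_in_D_iff: "enc x - enc y \<in> D \<longleftrightarrow> x = y"
  using enc_in_D_imp_0[of "x - y"] vec.subspace_0[OF subspace_D]
  by (auto simp: vec.linear_diff[OF linear_enc])

lemma inj_enc: "inj enc"
  using enc_diff_in_D_iff vec.subspace_0[OF subspace_D] by (metis injI right_minus_eq)

lemma dim_C_minus_dim_D: "vec.dim C - vec.dim D = CARD('k)"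
proof -
  have "0 \<in> range enc"
    by (metis rangeI vec.linear_0[OF linear_enc])
  then have "range enc \<inter> D = {0}"
    using enc_in_D_imp_0 vec.linear_0[OF linear_enc] vec.subspace_0[OF subspace_D] by blast
  then have dim_Int: "vec.dim (range enc \<inter> D) = 0"
    by simp
  have sums: "{x + y |x y. x \<in> range enc \<and> y \<in> D} = C"
  proof (intro equalityI subsetI)
    fix z assume "z \<in> {x + y |x y. x \<in> range enc \<and> y \<in> D}"
    then obtain x y where "z = enc x + y" "y \<in> D"
      by blast
    then show "z \<in> C"
      using enc_in_C D_subset_C vec.subspace_add[OF subspace_C] by blast
  next
    fix c assume "c \<in> C"
    then obtain x where "c - enc x \<in> D"
      using C_subset_enc_plus_D by blast
    then show "c \<in> {x + y |x y. x \<in> range enc \<and> y \<in> D}"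
      by (intro CollectI exI[of _ "enc x"] exI[of _ "c - enc x"]) auto
  qed
  have "vec.subspace (range enc)"
    by (rule vec.linear_subspace_image[OF linear_enc vec.subspace_UNIV])
  then have "vec.dim C + vec.dim (range enc \<inter> D) = vec.dim (range enc) + vec.dim D"
    using vec.dim_sums_Int[OF _ subspace_D, of "range enc"] sums by simp
  moreover have "vec.dim (range enc) = CARD('k)"
    using vec.dim_image_eq[OF linear_enc, of UNIV] inj_enc
    by (simp add: inj_on_def inj_def card_cart_basis)
  ultimately show ?thesis
    using dim_Int by linarith
qed

definition label :: "'a ^ 'n \<Rightarrow> 'a ^ 'k" where
  "label c = (SOME x. c - enc x \<in> D)"

lemma label_in_D: "c \<in> C \<Longrightarrow> c - enc (label c) \<in> D"
  unfolding label_def using C_subset_enc_plus_D by (metis someI_ex)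

lemma label_enc [simp]: "label (enc x) = x"
  using label_in_D[OF enc_in_C, of x] enc_diff_in_D_iff by simp

lemma coset_shift:
  assumes "c - d \<in> D"
  shows "v - c \<in> D \<longleftrightarrow> v - d \<in> D"
proof -
  have "v - d = (v - c) + (c - d)" "v - c = (v - d) - (c - d)"
    by simp_all
  then show ?thesis
    using assms vec.subspace_add[OF subspace_D] vec.subspace_diff[OF subspace_D] by metis
qed

definition basis_state :: "'a ^ 'k \<Rightarrow> 'a ^ 'n \<Rightarrow> complex" where
  "basis_state x v = (if v - enc x \<in> D then complex_of_real (1 / sqrt (card D)) else 0)"

lemma card_D_pos: "card D > 0"
  using vec.subspace_0[OF subspace_D] by (auto simp: card_gt_0_iff)

lemma coset_state_eq_basis_state:
  assumes "c \<in> C"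
  shows "coset_state D c v = complex_of_real (sqrt (card D)) * basis_state (label c) v"
  using coset_shift[OF label_in_D[OF assms], of v] card_D_pos
  by (simp add: coset_state_eq_indicator basis_state_def)

lemma inner_basis_state: "inner_st (basis_state x) (basis_state y) = (if x = y then 1 else 0)"
proof (cases "x = y")
  case True
  let ?r = "complex_of_real (1 / sqrt (card D))"
  have "cnj ?r * ?r = 1 / of_nat (card D)"
    using card_D_pos by (simp flip: of_real_mult add: divide_simps)
  then have "inner_st (basis_state x) (basis_state x) =
      (\<Sum>v\<in>UNIV. if v - enc x \<in> D then 1 / of_nat (card D) else 0)"
    unfolding inner_st_def basis_state_def by (intro sum.cong refl) auto
  also have "\<dots> = of_nat (card {v. v - enc x \<in> D}) / of_nat (card D)"
    by (simp add: sum.If_cases Int_def)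
  also have "card {v. v - enc x \<in> D} = card D"
  proof -
    have "{v. v - enc x \<in> D} = (\<lambda>d. d + enc x) ` D"
      by (auto simp: image_iff) (metis diff_add_cancel)
    then show ?thesis
      by (simp add: card_image inj_on_def)
  qed
  finally show ?thesis
    using True vec.subspace_0[OF subspace_D] by auto
next
  case False
  have "cnj (basis_state x v) * basis_state y v = 0" for v
  proof (rule ccontr)
    assume "cnj (basis_state x v) * basis_state y v \<noteq> 0"
    then have "v - enc x \<in> D" "v - enc y \<in> D"
      unfolding basis_state_def by (auto split: if_splits)
    then have "(v - enc x) - (v - enc y) \<in> D"
      by (rule vec.subspace_diff[OF subspace_D])
    then have "enc y - enc x \<in> D"
      by simp
    then show False
      using enc_diff_in_D_iff[of y x] False by simp
  qed
  then have "inner_st (basis_state x) (basis_state y) = 0"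
    unfolding inner_st_def by (rule sum.neutral[OF ballI])
  with False show ?thesis
    by simp
qed

lemma coset_span_eq_basis_span:
  "{\<lambda>v. \<Sum>c\<in>C. f c * coset_state D c v | f. True} =
    {\<lambda>v. \<Sum>x\<in>UNIV. g x * basis_state x v | g. True}"
proof (intro equalityI subsetI)
  let ?r = "complex_of_real (sqrt (card D))"
  fix \<psi> assume "\<psi> \<in> {\<lambda>v. \<Sum>c\<in>C. f c * coset_state D c v | f. True}"
  then obtain f where f: "\<psi> = (\<lambda>v. \<Sum>c\<in>C. f c * coset_state D c v)"
    by blast
  define g where "g x = (\<Sum>c\<in>{c \<in> C. label c = x}. f c * ?r)" for x
  have "\<psi> = (\<lambda>v. \<Sum>x\<in>UNIV. g x * basis_state x v)"
  proof
    fix v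
    have "\<psi> v = (\<Sum>x\<in>UNIV. \<Sum>c\<in>{c \<in> C. label c = x}. f c * coset_state D c v)"
      unfolding f by (rule sum.group[symmetric]) simp_all
    also have "\<dots> = (\<Sum>x\<in>UNIV. g x * basis_state x v)"
      unfolding g_def sum_distrib_right
      by (intro sum.cong refl) (simp add: coset_state_eq_basis_state mult.assoc)
    finally show "\<psi> v = (\<Sum>x\<in>UNIV. g x * basis_state x v)" .
  qed
  then show "\<psi> \<in> {\<lambda>v. \<Sum>x\<in>UNIV. g x * basis_state x v | g. True}"
    by blast
next
  let ?r = "complex_of_real (sqrt (card D))"
  fix \<psi> assume "\<psi> \<in> {\<lambda>v. \<Sum>x\<in>UNIV. g x * basis_state x v | g. True}"
  then obtain g where g: "\<psi> = (\<lambda>v. \<Sum>x\<in>UNIV. g x * basis_state x v)"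
    by blast
  have "?r \<noteq> 0"
    using vec.subspace_0[OF subspace_D] by auto
  define f where "f c = (if c \<in> range enc then g (label c) / ?r else 0)" for c
  have "\<psi> = (\<lambda>v. \<Sum>c\<in>C. f c * coset_state D c v)"
  proof
    fix v
    have "(\<Sum>c\<in>C. f c * coset_state D c v) = (\<Sum>c\<in>range enc. f c * coset_state D c v)"
      using enc_in_C by (intro sum.mono_neutral_right) (auto simp: f_def)
    also have "\<dots> = (\<Sum>x\<in>UNIV. f (enc x) * coset_state D (enc x) v)"
      by (simp add: sum.reindex[OF inj_enc])
    also have "\<dots> = \<psi> v"
      unfolding g using \<open>?r \<noteq> 0\<close>
      by (intro sum.cong refl) (simp add: f_def coset_state_eq_basis_state[OF enc_in_C])
    finally show "\<psi> v = (\<Sum>c\<in>C. f c * coset_state D c v)" ..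
  qed
  then show "\<psi> \<in> {\<lambda>v. \<Sum>c\<in>C. f c * coset_state D c v | f. True}"
    by blast
qed

end

section \<open>The punctured Reed-Solomon CSS code\<close>

text \<open>\<open>\<alpha>\<close> enumerates the code coordinates and \<open>\<sigma>\<close> the logical points, together all of \<open>F\<^sub>q\<close>.
  The CSS code has \<open>C\<^sub>1 = rs_code m\<close> and \<open>C\<^sub>2 = rs_code (q - 2 - m)\<close>, and \<open>C\<^sub>2\<^sup>\<bottom> = vanishing_code\<close>.\<close>
locale rs_css_code =
  fixes \<alpha> :: "'n::finite \<Rightarrow> 'a::{field,finite}" and \<sigma> :: "'k::finite \<Rightarrow> 'a" and m :: nat
  assumes bij_points: "bij (case_sum \<alpha> \<sigma>)"
    and degree_bound: "3 * m + 2 \<le> CARD('a)"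
    and card_k_le: "CARD('k) \<le> m + 1"
begin

lemma inj_\<alpha>: "inj \<alpha>"
  using inj_eq[OF bij_is_inj[OF bij_points], of "Inl _" "Inl _"] by (auto intro: injI)

lemma inj_\<sigma>: "inj \<sigma>"
  using inj_eq[OF bij_is_inj[OF bij_points], of "Inr _" "Inr _"] by (auto intro: injI)

lemma sum_UNIV_split: "(\<Sum>a\<in>UNIV. f a) = (\<Sum>i\<in>UNIV. f (\<alpha> i)) + (\<Sum>j\<in>UNIV. f (\<sigma> j))"
proof -
  have "(\<Sum>a\<in>UNIV. f a) = (\<Sum>s\<in>UNIV. f (case_sum \<alpha> \<sigma> s))"
    using sum.reindex_bij_betw[of "case_sum \<alpha> \<sigma>" UNIV UNIV f] bij_points by (simp add: bij_def)
  also have "\<dots> = (\<Sum>i\<in>UNIV. f (\<alpha> i)) + (\<Sum>j\<in>UNIV. f (\<sigma> j))"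
    unfolding UNIV_Plus_UNIV[symmetric] sum.Plus[OF finite finite] by (simp add: comp_def)
  finally show ?thesis .
qed

lemma card_points: "CARD('n) + CARD('k) = CARD('a)"
  using sum_UNIV_split[of "\<lambda>_. 1 :: nat"] by simp

lemma m_less_card_n: "m < CARD('n)"
  using card_points degree_bound card_k_le by linarith

definition rs_code :: "nat \<Rightarrow> ('a ^ 'n) set" where
  "rs_code d = eval_vec \<alpha> ` {p. degree p \<le> d}"

definition vanishing_code :: "('a ^ 'n) set" where
  "vanishing_code = eval_vec \<alpha> ` {p. degree p \<le> m \<and> (\<forall>j. poly p (\<sigma> j) = 0)}"

definition interp :: "'a ^ 'k \<Rightarrow> 'a poly" where
  "interp x = lagrange_interp \<sigma> (($) x)"

definition encode :: "'a ^ 'k \<Rightarrow> 'a ^ 'n" where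
  "encode x = eval_vec \<alpha> (interp x)"

lemma subspace_rs_code: "vec.subspace (rs_code d)"
  unfolding rs_code_def
  by (rule subspace_eval_vec_image) (auto intro: degree_add_le le_trans[OF degree_smult_le])

lemma subspace_vanishing_code: "vec.subspace vanishing_code"
  unfolding vanishing_code_def
  by (rule subspace_eval_vec_image) (auto intro: degree_add_le le_trans[OF degree_smult_le])

lemma vanishing_code_subset_rs_code: "vanishing_code \<subseteq> rs_code m"
  unfolding vanishing_code_def rs_code_def by auto

lemma degree_interp: "degree (interp x) \<le> m"
  using degree_lagrange_interp[of \<sigma> "($) x"] card_k_le unfolding interp_def by linarith

lemma poly_interp: "poly (interp x) (\<sigma> j) = x $ j"
  unfolding interp_def by (rule poly_lagrange_interp[OF inj_\<sigma>])

lemma linear_encode: "Vector_Spaces.linear (*s) (*s) encode"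
proof -
  have "encode (x + y) = encode x + encode y" for x y
  proof -
    have "($) (x + y) = (\<lambda>i. x $ i + y $ i)"
      by (rule ext) simp
    then show ?thesis
      by (simp add: encode_def interp_def lagrange_interp_add eval_vec_add)
  qed
  moreover have "encode (c *s x) = c *s encode x" for c x
  proof -
    have "($) (c *s x) = (\<lambda>i. c * x $ i)"
      by (rule ext) simp
    then show ?thesis
      by (simp add: encode_def interp_def lagrange_interp_smult eval_vec_smult)
  qed
  ultimately show ?thesis
    by (simp add: Vector_Spaces.linear_iff vec.vector_space_axioms)
qed

lemma sum_eval_eq_neg_sum_logical:
  assumes "degree p \<le> CARD('a) - 2"
  shows "(\<Sum>i\<in>UNIV. poly p (\<alpha> i)) = - (\<Sum>j\<in>UNIV. poly p (\<sigma> j))"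
  using sum_UNIV_split[of "poly p"] sum_UNIV_poly_eq_0[OF assms] by (simp add: eq_neg_iff_add_eq_0)

lemma vanishing_code_subset_dual: "vanishing_code \<subseteq> dual_code (rs_code (CARD('a) - 2 - m))"
proof (intro subsetI, unfold dual_code_def, intro CollectI ballI)
  fix u w assume "u \<in> vanishing_code" "w \<in> rs_code (CARD('a) - 2 - m)"
  then obtain p q where p: "degree p \<le> m" "\<forall>j. poly p (\<sigma> j) = 0" "u = eval_vec \<alpha> p"
    and q: "degree q \<le> CARD('a) - 2 - m" "w = eval_vec \<alpha> q"
    unfolding vanishing_code_def rs_code_def by blast
  have "degree (p * q) \<le> CARD('a) - 2"
    using degree_mult_le[of p q] p(1) q(1) degree_bound by linarith
  then have "(\<Sum>i\<in>UNIV. poly (p * q) (\<alpha> i)) = - (\<Sum>j\<in>UNIV. poly (p * q) (\<sigma> j))"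
    by (rule sum_eval_eq_neg_sum_logical)
  also have "\<dots> = 0"
    using p(2) by simp
  finally have "(\<Sum>i\<in>UNIV. poly (p * q) (\<alpha> i)) = 0" .
  then show "bil u w = 0"
    by (simp add: bil_def p(3) q(2))
qed

lemma exists_poly_extending_by_zero:
  "\<exists>g. degree g \<le> CARD('a) - 1 \<and> (\<forall>i. poly g (\<alpha> i) = v $ i) \<and> (\<forall>j. poly g (\<sigma> j) = 0)"
proof -
  let ?g = "lagrange_interp (case_sum \<alpha> \<sigma>) (case_sum (($) v) (\<lambda>_. 0))"
  have "degree ?g \<le> CARD('n + 'k) - 1"
    by (rule degree_lagrange_interp)
  moreover have "CARD('n + 'k) = CARD('a)"
    using card_points by (simp add: card_UNIV_sum)
  moreover have "poly ?g (case_sum \<alpha> \<sigma> s) = case_sum (($) v) (\<lambda>_. 0) s" for s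
    by (rule poly_lagrange_interp[OF bij_is_inj[OF bij_points]])
  ultimately show ?thesis
    by (metis sum.case)
qed

lemma dual_subset_vanishing_code: "dual_code (rs_code (CARD('a) - 2 - m)) \<subseteq> vanishing_code"
proof
  fix v assume v: "v \<in> dual_code (rs_code (CARD('a) - 2 - m))"
  obtain g where g: "degree g \<le> CARD('a) - 1" "\<forall>i. poly g (\<alpha> i) = v $ i" "\<forall>j. poly g (\<sigma> j) = 0"
    using exists_poly_extending_by_zero by blast
  text \<open>Testing \<open>v\<close> against the monomial codeword \<open>x ^ j\<close> of \<open>C\<^sub>2\<close> reads off the coefficient
    of \<open>x ^ (q - 1 - j)\<close> in \<open>g\<close>.\<close>
  have "coeff g i = 0" if "m < i" for i
  proof (cases "i \<le> CARD('a) - 1")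
    case True
    define j where "j = CARD('a) - 1 - i"
    have j: "j \<le> CARD('a) - 2 - m" "j \<le> CARD('a) - 2" "i = CARD('a) - 1 - j"
      using that True degree_bound unfolding j_def by auto
    have "eval_vec \<alpha> (monom 1 j) \<in> rs_code (CARD('a) - 2 - m)"
      unfolding rs_code_def using j(1) by (intro imageI) (simp add: degree_monom_le le_trans[OF degree_monom_le])
    then have "0 = bil v (eval_vec \<alpha> (monom 1 j))"
      using v unfolding dual_code_def by simp
    also have "\<dots> = (\<Sum>a\<in>UNIV. poly g a * a ^ j)"
      using sum_UNIV_split[of "\<lambda>a. poly g a * a ^ j"] g(2,3) by (simp add: bil_def poly_monom)
    also have "\<dots> = - coeff g i"
      using sum_UNIV_poly_mult_power[OF g(1) j(2)] j(3) by simp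
    finally show ?thesis
      by simp
  next
    case False
    then show ?thesis
      using g(1) by (simp add: coeff_eq_0)
  qed
  then have "degree g \<le> m"
    by (simp add: degree_le)
  moreover have "eval_vec \<alpha> g = v"
    using g(2) by (simp add: vec_eq_iff)
  ultimately show "v \<in> vanishing_code"
    unfolding vanishing_code_def using g(3) by blast
qed

lemma dual_rs_code: "dual_code (rs_code (CARD('a) - 2 - m)) = vanishing_code"
  using vanishing_code_subset_dual dual_subset_vanishing_code by blast

lemma encode_in_vanishing_code_imp_0:
  assumes "encode x \<in> vanishing_code"
  shows "x = 0"
proof -
  obtain r where r: "degree r \<le> m" "\<forall>j. poly r (\<sigma> j) = 0" "encode x = eval_vec \<alpha> r"
    using assms unfolding vanishing_code_def by blast
  have "interp x = r"
  proof (rule eval_vec_inj_on_low_degree[OF inj_\<alpha>])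
    show "degree (interp x) < CARD('n)" "degree r < CARD('n)"
      using degree_interp[of x] r(1) m_less_card_n by linarith+
    show "eval_vec \<alpha> (interp x) = eval_vec \<alpha> r"
      using r(3) unfolding encode_def .
  qed
  then show ?thesis
    using r(2) poly_interp[of x, symmetric] by (simp add: vec_eq_iff)
qed

lemma rs_code_subset_encode_plus_vanishing:
  assumes "c \<in> rs_code m"
  shows "\<exists>x. c - encode x \<in> vanishing_code"
proof -
  obtain p where p: "degree p \<le> m" "c = eval_vec \<alpha> p"
    using assms unfolding rs_code_def by blast
  define x where "x = (\<chi> j. poly p (\<sigma> j))"
  have "c - encode x = eval_vec \<alpha> (p - interp x)"
    by (simp add: p(2) encode_def eval_vec_diff)
  moreover have "degree (p - interp x) \<le> m"
    using degree_diff_le[OF p(1) degree_interp] .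
  moreover have "\<forall>j. poly (p - interp x) (\<sigma> j) = 0"
    by (simp add: poly_interp x_def)
  ultimately show ?thesis
    unfolding vanishing_code_def by blast
qed

lemma encode_in_rs_code: "encode x \<in> rs_code m"
  unfolding encode_def rs_code_def using degree_interp by blast

sublocale css_encoding "rs_code m" vanishing_code encode
  by (rule css_encoding.intro[OF subspace_rs_code subspace_vanishing_code vanishing_code_subset_rs_code
      linear_encode encode_in_rs_code rs_code_subset_encode_plus_vanishing
      encode_in_vanishing_code_imp_0])

lemma hweight_rs_code:
  assumes "v \<in> rs_code d" "v \<noteq> 0"
  shows "CARD('n) - d \<le> hweight v"
proof -
  obtain p where p: "degree p \<le> d" "v = eval_vec \<alpha> p"
    using assms(1) unfolding rs_code_def by blast
  then have "p \<noteq> 0"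
    using assms(2) by auto
  then show ?thesis
    using hweight_eval_vec[OF inj_\<alpha>] p by fastforce
qed

lemma css_distance:
  assumes "v \<in> (rs_code m - dual_code (rs_code (CARD('a) - 2 - m))) \<union>
    (rs_code (CARD('a) - 2 - m) - dual_code (rs_code m))"
  shows "CARD('n) + m + 2 - CARD('a) \<le> hweight v"
proof -
  consider "v \<in> rs_code m" "v \<notin> vanishing_code"
    | "v \<in> rs_code (CARD('a) - 2 - m)" "v \<notin> dual_code (rs_code m)"
    using assms dual_rs_code by blast
  then show ?thesis
  proof cases
    case 1
    then have "CARD('n) - m \<le> hweight v"
      using hweight_rs_code vec.subspace_0[OF subspace_vanishing_code] by blast
    then show ?thesis
      using degree_bound by arith
  next
    case 2
    then have "CARD('n) - (CARD('a) - 2 - m) \<le> hweight v"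
      using hweight_rs_code zero_in_dual_code by blast
    then show ?thesis
      using degree_bound by arith
  qed
qed

lemma dual_subset_rs_code: "dual_code (rs_code (CARD('a) - 2 - m)) \<subseteq> rs_code m"
  unfolding dual_rs_code by (rule vanishing_code_subset_rs_code)

lemma dim_rs_code_minus_dim_dual:
  "vec.dim (rs_code m) - vec.dim (dual_code (rs_code (CARD('a) - 2 - m))) = CARD('k)"
  unfolding dual_rs_code by (rule dim_C_minus_dim_D)

lemma css_space_eq_basis_span:
  "css_space (rs_code m) (rs_code (CARD('a) - 2 - m)) =
    {\<lambda>v. \<Sum>x\<in>UNIV. f x * basis_state x v | f. True}"
  unfolding css_space_def dual_rs_code by (rule coset_span_eq_basis_span)

lemma coset_of_encode:
  assumes "u - encode x \<in> vanishing_code"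
  obtains p where "degree p \<le> m" "u = eval_vec \<alpha> p" "\<And>j. poly p (\<sigma> j) = x $ j"
proof -
  obtain r where r: "degree r \<le> m" "\<forall>j. poly r (\<sigma> j) = 0" "u - encode x = eval_vec \<alpha> r"
    using assms unfolding vanishing_code_def by blast
  show ?thesis
  proof
    show "degree (interp x + r) \<le> m"
      using degree_add_le[OF degree_interp r(1)] .
    show "u = eval_vec \<alpha> (interp x + r)"
      using r(3) by (simp add: encode_def eval_vec_add algebra_simps)
    show "poly (interp x + r) (\<sigma> j) = x $ j" for j
      using r(2) by (simp add: poly_interp)
  qed
qed

lemma sum_triple_product_coset:
  assumes "CHAR('a) = 2"
    and "u - encode x \<in> vanishing_code" "v - encode y \<in> vanishing_code" "w - encode z \<in> vanishing_code"
  shows "(\<Sum>i\<in>UNIV. u $ i * v $ i * w $ i) = (\<Sum>j\<in>UNIV. x $ j * y $ j * z $ j)"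
proof -
  obtain p where p: "degree p \<le> m" "u = eval_vec \<alpha> p" "\<And>j. poly p (\<sigma> j) = x $ j"
    using coset_of_encode[OF assms(2)] by blast
  obtain q where q: "degree q \<le> m" "v = eval_vec \<alpha> q" "\<And>j. poly q (\<sigma> j) = y $ j"
    using coset_of_encode[OF assms(3)] by blast
  obtain r where r: "degree r \<le> m" "w = eval_vec \<alpha> r" "\<And>j. poly r (\<sigma> j) = z $ j"
    using coset_of_encode[OF assms(4)] by blast
  have "degree (p * q * r) \<le> CARD('a) - 2"
    using degree_mult_le[of "p * q" r] degree_mult_le[of p q] p(1) q(1) r(1) degree_bound
    by linarith
  then have "(\<Sum>i\<in>UNIV. poly (p * q * r) (\<alpha> i)) = - (\<Sum>j\<in>UNIV. poly (p * q * r) (\<sigma> j))"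
    by (rule sum_eval_eq_neg_sum_logical)
  then show ?thesis
    by (simp add: p q r uminus_CHAR_2[OF assms(1)])
qed

lemma transversal_CCZ_basis_state:
  assumes "CARD('a) = 2 ^ l" "l > 0"
  shows "transversal_CCZ l (tensor3 (basis_state x) (basis_state y) (basis_state z)) =
    (\<lambda>s. sign_of (ftr l (\<Sum>i\<in>UNIV. x $ i * y $ i * z $ i)) *
      tensor3 (basis_state x) (basis_state y) (basis_state z) s)"
proof
  fix s :: "('a ^ 'n) \<times> ('a ^ 'n) \<times> ('a ^ 'n)"
  obtain u v w where s: "s = (u, v, w)"
    by (cases s) auto
  show "transversal_CCZ l (tensor3 (basis_state x) (basis_state y) (basis_state z)) s =
    sign_of (ftr l (\<Sum>i\<in>UNIV. x $ i * y $ i * z $ i)) *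
      tensor3 (basis_state x) (basis_state y) (basis_state z) s"
  proof (cases "u - encode x \<in> vanishing_code \<and> v - encode y \<in> vanishing_code \<and>
      w - encode z \<in> vanishing_code")
    case True
    have "(\<Prod>i\<in>UNIV. sign_of (ftr l (u $ i * v $ i * w $ i))) =
        sign_of (ftr l (\<Sum>i\<in>UNIV. u $ i * v $ i * w $ i))"
      by (rule prod_sign_of_ftr[OF assms]) simp
    also have "(\<Sum>i\<in>UNIV. u $ i * v $ i * w $ i) = (\<Sum>i\<in>UNIV. x $ i * y $ i * z $ i)"
      using True by (intro sum_triple_product_coset[OF CHAR_eq_2_if_card_eq_power_2[OF assms]]) auto
    finally show ?thesis
      unfolding s transversal_CCZ_def tensor3_def by simp
  next
    case False
    then show ?thesis
      unfolding s transversal_CCZ_def tensor3_def basis_state_def by auto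
  qed
qed

end

section \<open>Parameters for \<open>q = 2 ^ l\<close>\<close>

lemma exists_rs_css_code:
  assumes "CARD('n) + CARD('k) = CARD('a)" "3 * m + 2 \<le> CARD('a)" "CARD('k) \<le> m + 1"
  obtains \<alpha> :: "'n::finite \<Rightarrow> 'a::{field,finite}" and \<sigma> :: "'k::finite \<Rightarrow> 'a"
  where "rs_css_code \<alpha> \<sigma> m"
proof -
  have "CARD('n + 'k) = CARD('a)"
    using assms(1) by (simp add: card_UNIV_sum)
  then obtain h :: "'n + 'k \<Rightarrow> 'a" where "bij h"
    using finite_same_card_bij[of "UNIV :: ('n + 'k) set" "UNIV :: 'a set"] by (auto simp: bij_def)
  moreover have "case_sum (h \<circ> Inl) (h \<circ> Inr) = h"
    by (rule ext) (simp split: sum.split)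
  ultimately have "rs_css_code (h \<circ> Inl) (h \<circ> Inr) m"
    using assms(2,3) by unfold_locales simp_all
  then show ?thesis
    by (rule that)
qed

lemma power_of_two_code_parameters:
  fixes q :: nat
  assumes "q = 2 ^ l" "l \<ge> 3"
  shows "3 * q div 4 + q div 4 = q" "3 * ((q - 2) div 3) + 2 \<le> q" "q div 4 \<le> (q - 2) div 3 + 1"
    "int (q div 3) - int (q div 4) + 1 \<le> int (3 * q div 4 + (q - 2) div 3 + 2 - q)"
proof -
  have "(2::nat) ^ l = 2 ^ 3 * 2 ^ (l - 3)"
    using assms(2) by (metis le_add_diff_inverse power_add)
  then obtain t where t: "q = 8 * t" "t \<ge> 1"
    using assms(1) by force
  show "3 * q div 4 + q div 4 = q" "3 * ((q - 2) div 3) + 2 \<le> q" "q div 4 \<le> (q - 2) div 3 + 1"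
    "int (q div 3) - int (q div 4) + 1 \<le> int (3 * q div 4 + (q - 2) div 3 + 2 - q)"
    using t by simp_all
qed

theorem theorem5p1:
  fixes l :: nat
  assumes "l \<ge> 3"
    and "CARD('a::{field,finite}) = 2 ^ l"
    and "CARD('n::finite) = 3 * CARD('a) div 4"
    and "CARD('k::finite) = CARD('a) div 4"
  shows "\<exists>(C1 :: ('a ^ 'n) set) (C2 :: ('a ^ 'n) set) (B :: 'a ^ 'k \<Rightarrow> ('a ^ 'n \<Rightarrow> complex)).
           vec.subspace C1 \<and> vec.subspace C2 \<and> dual_code C2 \<subseteq> C1 \<and>
           vec.dim C1 - vec.dim (dual_code C2) = CARD('k) \<and>
           (\<forall>v \<in> (C1 - dual_code C2) \<union> (C2 - dual_code C1).
              int (hweight v) \<ge> int (CARD('a) div 3) - int (CARD('a) div 4) + 1) \<and>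
           (\<forall>x y. inner_st (B x) (B y) = (if x = y then 1 else 0)) \<and>
           css_space C1 C2 = {\<lambda>v. \<Sum>x\<in>UNIV. f x * B x v | f. True} \<and>
           (\<forall>x y z. transversal_CCZ l (tensor3 (B x) (B y) (B z)) =
              (\<lambda>s. sign_of (ftr l (\<Sum>i\<in>UNIV. x $ i * y $ i * z $ i)) * tensor3 (B x) (B y) (B z) s))"
proof -
  define m where "m = (CARD('a) - 2) div 3"
  have params: "CARD('n) + CARD('k) = CARD('a)" "3 * m + 2 \<le> CARD('a)" "CARD('k) \<le> m + 1"
    "int (CARD('a) div 3) - int (CARD('a) div 4) + 1 \<le> int (CARD('n) + m + 2 - CARD('a))"
    using power_of_two_code_parameters[OF assms(2,1)] assms(3,4) unfolding m_def by simp_all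
  obtain \<alpha> :: "'n \<Rightarrow> 'a" and \<sigma> :: "'k \<Rightarrow> 'a" where "rs_css_code \<alpha> \<sigma> m"
    by (rule exists_rs_css_code[OF params(1-3)])
  then interpret c: rs_css_code \<alpha> \<sigma> m .
  have distance: "int (hweight v) \<ge> int (CARD('a) div 3) - int (CARD('a) div 4) + 1"
    if "v \<in> (c.rs_code m - dual_code (c.rs_code (CARD('a) - 2 - m))) \<union>
      (c.rs_code (CARD('a) - 2 - m) - dual_code (c.rs_code m))" for v
    using c.css_distance[OF that] params(4) by linarith
  show ?thesis
    using assms(1)
    by (intro exI[of _ "c.rs_code m"] exI[of _ "c.rs_code (CARD('a) - 2 - m)"] exI[of _ c.basis_state]
        conjI allI ballI c.subspace_rs_code c.dual_subset_rs_code c.dim_rs_code_minus_dim_dual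
        distance c.inner_basis_state c.css_space_eq_basis_span c.transversal_CCZ_basis_state[OF assms(2)])
      simp_all
qed

end
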